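(* Let $(L,[\cdot,\cdot],\{\cdot,\cdot,\cdot\},\alpha)$ be a Hom-Lie-Yamaguti algebra over a field $\mathbb{K}$, and let $(f_t,g_t)$ and $(f_t',g_t')$, with $f_t=\sum_{i\ge0}f_it^i$, $g_t=\sum_{i\ge0}g_it^i$, $f_t'=\sum_{i\ge0}f_i't^i$, $g_t'=\sum_{i\ge0}g_i't^i$, be equivalent one-parameter formal deformations of it. Then $(f_1,g_1)$ and $(f_1',g_1')$ belong to the same cohomology class in $HomH^2(L,L)\times HomH^3(L,L)$; that is, $(f_1-f_1',g_1-g_1')\in HomB^2(L,L)\times HomB^3(L,L)$.
   Context: A Hom-Lie-Yamaguti algebra (HLYA) over a commutative ring $R$ (here $R=\mathbb{K}$ a field or $R=\mathbb{K}[[t]]$) is a quadruple $(L,[\cdot,\cdot],\{\cdot,\cdot,\cdot\},\alpha)$ where $L$ is an $R$-module, $[\cdot,\cdot]$ is an $R$-bilinear and $\{\cdot,\cdot,\cdot\}$ an $R$-trilinear operation on $L$ (written $[xy]$, $\{xyz\}$), and $\alpha:L\to L$ is $R$-linear, such that for all $x,y,z,u,v\in L$: $\alpha([xy])=[\alpha(x)\alpha(y)]$; $\alpha(\{xyz\})=\{\alpha(x)\alpha(y)\alpha(z)\}$; $[xx]=0$; $\{xxy\}=0$; $\circlearrowleft_{x,y,z}([[xy]\alpha(z)]+\{xyz\})=0$; $\circlearrowleft_{x,y,z}\{[xy]\alpha(z)\alpha(u)\}=0$; $\{\alpha(x)\alpha(y)[uv]\}=[\{xyu\}\alpha^2(v)]+[\alpha^2(u)\{xyv\}]$;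 $\{\alpha^2(u)\alpha^2(v)\{xyz\}\}=\{\{uvx\}\alpha^2(y)\alpha^2(z)\}+\{\alpha^2(x)\{uvy\}\alpha^2(z)\}+\{\alpha^2(x)\alpha^2(y)\{uvz\}\}$, where $\circlearrowleft_{x,y,z}$ denotes the sum over cyclic permutations of $x,y,z$. Cochains: for $n\ge1$, $HomC^n(L,L)$ is the set of $\mathbb{K}$-multilinear maps $f:L^n\to L$ with $f(x_1,\dots,x_n)=0$ whenever $x_{2i-1}=x_{2i}$ for some $i$, and $f(\alpha(x_1),\dots,\alpha(x_n))=\alpha(f(x_1,\dots,x_n))$. For $h\in HomC^1(L,L)$ put $\delta_I^1h(x,y)=[xh(y)]+[h(x)y]-h([xy])$ and $\delta_{II}^1h(x,y,z)=\{h(x)yz\}+\{xh(y)z\}+\{xyh(z)\}-h(\{xyz\})$. For $(f,g)\in HomC^2(L,L)\times HomC^3(L,L)$ put $\delta_I^2(f,g)(x,y,z,u)=\{\alpha(x)\alpha(y)f(z,u)\}-f(\{xyz\},\alpha^2(u))-f(\alpha^2(z),\{xyu\})+g(\alpha(x),\alpha(y),[zu])-[\alpha^2(z)g(x,y,u)]-[g(x,y,z)\alpha^2(u)]$, $\delta_{II}^2 g(x,y,u,v,w)=\{\alpha^2(x)\alpha^2(y)g(u,v,w)\}-\{g(x,y,u)\alpha^2(v)\alpha^2(w)\}-\{\alpha^2(u)g(x,y,v)\alpha^2(w)\}-\{\alpha^2(u)\alpha^2(v)g(x,y,w)\}+g(\alpha^2(x),\alpha^2(y),\{uvw\})-g(\{xyu\},\alpha^2(v),\alpha^2(w))-g(\alpha^2(u),\{xyv\},\alpha^2(w))-g(\alpha^2(u),\alpha^2(v),\{xyw\})$,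 $d_I^2(f,g)(x,y,z)=\circlearrowleft_{x,y,z}([f(x,y)\alpha(z)]+f([xy],\alpha(z))+g(x,y,z))$, $d_{II}^2(f,g)(x,y,z,u)=\circlearrowleft_{x,y,z}(\{f(x,y)\alpha(z)\alpha(u)\}+g([xy],\alpha(z),\alpha(u)))$. Then $HomZ^2(L,L)\times HomZ^3(L,L)$ is the set of $(f,g)\in HomC^2\times HomC^3$ with $\delta_I^2(f,g)=0$, $\delta_{II}^2g=0$, $d_I^2(f,g)=0$, $d_{II}^2(f,g)=0$; $HomB^2(L,L)\times HomB^3(L,L)=\{(\delta_I^1h,\delta_{II}^1h): h\in HomC^1(L,L)\}$ (contained in the former); and the second cohomology group is the quotient $HomH^2(L,L)\times HomH^3(L,L)=(HomZ^2\times HomZ^3)/(HomB^2\times HomB^3)$. Deformations: $\mathbb{K}$-multilinear maps on $L$ are extended $\mathbb{K}[[t]]$-multilinearly to $L[[t]]$, and $\alpha$ is extended $\mathbb{K}[[t]]$-linearly. A one-parameter formal deformation of $(L,[\cdot,\cdot],\{\cdot,\cdot,\cdot\},\alpha)$ is a pair $f_t=\sum_{i\ge0}f_it^i$, $g_t=\sum_{i\ge0}g_it^i$ with $f_0=[\cdot,\cdot]$, $g_0=\{\cdot,\cdot,\cdot\}$, each $f_i:L\times L\to L$ $\mathbb{K}$-bilinear and each $g_i:L^3\to L$ $\mathbb{K}$-trilinear, such that $(L[[t]],f_t,g_t,\alpha)$ is an HLYA over $\mathbb{K}[[t]]$. Two deformations $(f_t,g_t)$, $(f_t',g_t')$ are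 equivalent if there is a $\mathbb{K}[[t]]$-linear isomorphism $\Phi_t=\sum_{i\ge0}\phi_it^i:L[[t]]\to L[[t]]$ (each $\phi_i:L\to L$ $\mathbb{K}$-linear) with $\phi_0=\mathrm{id}_L$, $\Phi_t\circ\alpha=\alpha\circ\Phi_t$, $\Phi_t(f_t(x,y))=f_t'(\Phi_t(x),\Phi_t(y))$ and $\Phi_t(g_t(x,y,z))=g_t'(\Phi_t(x),\Phi_t(y),\Phi_t(z))$. *)

theory Defs
  imports Complex_Main "HOL-Library.Function_Algebras"
begin

definition HLYA_identities ::
  "('v::ab_group_add \<Rightarrow> 'v \<Rightarrow> 'v) \<Rightarrow> ('v \<Rightarrow> 'v \<Rightarrow> 'v \<Rightarrow> 'v) \<Rightarrow> ('v \<Rightarrow> 'v) \<Rightarrow> bool" where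
  "HLYA_identities br tr \<alpha> \<longleftrightarrow>
     (\<forall>x y. \<alpha> (br x y) = br (\<alpha> x) (\<alpha> y)) \<and>
     (\<forall>x y z. \<alpha> (tr x y z) = tr (\<alpha> x) (\<alpha> y) (\<alpha> z)) \<and>
     (\<forall>x. br x x = 0) \<and>
     (\<forall>x y. tr x x y = 0) \<and>
     (\<forall>x y z. (br (br x y) (\<alpha> z) + tr x y z) + (br (br y z) (\<alpha> x) + tr y z x)
                + (br (br z x) (\<alpha> y) + tr z x y) = 0) \<and>
     (\<forall>x y z u. tr (br x y) (\<alpha> z) (\<alpha> u) + tr (br y z) (\<alpha> x) (\<alpha> u)
                + tr (br z x) (\<alpha> y) (\<alpha> u) = 0) \<and>
     (\<forall>x y u v. tr (\<alpha> x) (\<alpha> y) (br u v)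
                = br (tr x y u) (\<alpha> (\<alpha> v)) + br (\<alpha> (\<alpha> u)) (tr x y v)) \<and>
     (\<forall>x y z u v. tr (\<alpha> (\<alpha> u)) (\<alpha> (\<alpha> v)) (tr x y z)
                = tr (tr u v x) (\<alpha> (\<alpha> y)) (\<alpha> (\<alpha> z))
                  + tr (\<alpha> (\<alpha> x)) (tr u v y) (\<alpha> (\<alpha> z))
                  + tr (\<alpha> (\<alpha> x)) (\<alpha> (\<alpha> y)) (tr u v z))"

definition lin1 :: "('k::field \<Rightarrow> 'v::ab_group_add \<Rightarrow> 'v) \<Rightarrow> ('v \<Rightarrow> 'v) \<Rightarrow> bool" where
  "lin1 s h \<longleftrightarrow> Vector_Spaces.linear s s h"

definition lin2 :: "('k::field \<Rightarrow> 'v::ab_group_add \<Rightarrow> 'v) \<Rightarrow> ('v \<Rightarrow> 'v \<Rightarrow> 'v) \<Rightarrow> bool" where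
  "lin2 s f \<longleftrightarrow> (\<forall>x. lin1 s (f x)) \<and> (\<forall>y. lin1 s (\<lambda>x. f x y))"

definition lin3 :: "('k::field \<Rightarrow> 'v::ab_group_add \<Rightarrow> 'v) \<Rightarrow> ('v \<Rightarrow> 'v \<Rightarrow> 'v \<Rightarrow> 'v) \<Rightarrow> bool" where
  "lin3 s g \<longleftrightarrow> (\<forall>x y. lin1 s (g x y)) \<and> (\<forall>x z. lin1 s (\<lambda>y. g x y z))
                 \<and> (\<forall>y z. lin1 s (\<lambda>x. g x y z))"

definition HLYA :: "('k::field \<Rightarrow> 'v::ab_group_add \<Rightarrow> 'v) \<Rightarrow> ('v \<Rightarrow> 'v \<Rightarrow> 'v)
     \<Rightarrow> ('v \<Rightarrow> 'v \<Rightarrow> 'v \<Rightarrow> 'v) \<Rightarrow> ('v \<Rightarrow> 'v) \<Rightarrow> bool" where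
  "HLYA s br tr \<alpha> \<longleftrightarrow> vector_space s \<and> lin2 s br \<and> lin3 s tr \<and> lin1 s \<alpha>
      \<and> HLYA_identities br tr \<alpha>"

type_synonym 'v pser = "nat \<Rightarrow> 'v"

definition ext_alpha :: "('v \<Rightarrow> 'v) \<Rightarrow> 'v pser \<Rightarrow> 'v pser" where
  "ext_alpha \<alpha> x = (\<lambda>n. \<alpha> (x n))"

text \<open>Phi_t = sum phi_i t^i extended K[[t]]-linearly.\<close>
definition ext1 :: "(nat \<Rightarrow> 'v \<Rightarrow> 'v::ab_group_add) \<Rightarrow> 'v pser \<Rightarrow> 'v pser" where
  "ext1 \<phi> x = (\<lambda>n. \<Sum>i\<le>n. \<phi> i (x (n - i)))"

text \<open>f_t = sum f_i t^i extended K[[t]]-bilinearly.\<close>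
definition ext2 :: "(nat \<Rightarrow> 'v \<Rightarrow> 'v \<Rightarrow> 'v::ab_group_add) \<Rightarrow> 'v pser \<Rightarrow> 'v pser \<Rightarrow> 'v pser" where
  "ext2 f x y = (\<lambda>n. \<Sum>i\<le>n. \<Sum>j\<le>n - i. f i (x j) (y (n - i - j)))"

text \<open>g_t = sum g_i t^i extended K[[t]]-trilinearly.\<close>
definition ext3 :: "(nat \<Rightarrow> 'v \<Rightarrow> 'v \<Rightarrow> 'v \<Rightarrow> 'v::ab_group_add)
     \<Rightarrow> 'v pser \<Rightarrow> 'v pser \<Rightarrow> 'v pser \<Rightarrow> 'v pser" where
  "ext3 g x y z = (\<lambda>n. \<Sum>i\<le>n. \<Sum>j\<le>n - i. \<Sum>k\<le>n - i - j.
                         g i (x j) (y k) (z (n - i - j - k)))"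

definition formal_deformation ::
  "('k::field \<Rightarrow> 'v::ab_group_add \<Rightarrow> 'v) \<Rightarrow> ('v \<Rightarrow> 'v \<Rightarrow> 'v) \<Rightarrow> ('v \<Rightarrow> 'v \<Rightarrow> 'v \<Rightarrow> 'v)
   \<Rightarrow> ('v \<Rightarrow> 'v) \<Rightarrow> (nat \<Rightarrow> 'v \<Rightarrow> 'v \<Rightarrow> 'v) \<Rightarrow> (nat \<Rightarrow> 'v \<Rightarrow> 'v \<Rightarrow> 'v \<Rightarrow> 'v) \<Rightarrow> bool" where
  "formal_deformation s br tr \<alpha> f g \<longleftrightarrow>
     f 0 = br \<and> g 0 = tr \<and> (\<forall>i. lin2 s (f i)) \<and> (\<forall>i. lin3 s (g i)) \<and>
     HLYA_identities (ext2 f) (ext3 g) (ext_alpha \<alpha>)"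

definition equivalent_deformations ::
  "('k::field \<Rightarrow> 'v::ab_group_add \<Rightarrow> 'v) \<Rightarrow> ('v \<Rightarrow> 'v)
   \<Rightarrow> (nat \<Rightarrow> 'v \<Rightarrow> 'v \<Rightarrow> 'v) \<Rightarrow> (nat \<Rightarrow> 'v \<Rightarrow> 'v \<Rightarrow> 'v \<Rightarrow> 'v)
   \<Rightarrow> (nat \<Rightarrow> 'v \<Rightarrow> 'v \<Rightarrow> 'v) \<Rightarrow> (nat \<Rightarrow> 'v \<Rightarrow> 'v \<Rightarrow> 'v \<Rightarrow> 'v) \<Rightarrow> bool" where
  "equivalent_deformations s \<alpha> f g f' g' \<longleftrightarrow>
     (\<exists>\<phi> :: nat \<Rightarrow> 'v \<Rightarrow> 'v.
        \<phi> 0 = id \<and> (\<forall>i. lin1 s (\<phi> i)) \<and> bij (ext1 \<phi>) \<and>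
        (\<forall>x. ext1 \<phi> (ext_alpha \<alpha> x) = ext_alpha \<alpha> (ext1 \<phi> x)) \<and>
        (\<forall>x y. ext1 \<phi> (ext2 f x y) = ext2 f' (ext1 \<phi> x) (ext1 \<phi> y)) \<and>
        (\<forall>x y z. ext1 \<phi> (ext3 g x y z) = ext3 g' (ext1 \<phi> x) (ext1 \<phi> y) (ext1 \<phi> z)))"

definition HomC1 :: "('k::field \<Rightarrow> 'v::ab_group_add \<Rightarrow> 'v) \<Rightarrow> ('v \<Rightarrow> 'v) \<Rightarrow> ('v \<Rightarrow> 'v) set" where
  "HomC1 s \<alpha> = {h. lin1 s h \<and> (\<forall>x. h (\<alpha> x) = \<alpha> (h x))}"

definition deltaI1 :: "('v::ab_group_add \<Rightarrow> 'v \<Rightarrow> 'v) \<Rightarrow> ('v \<Rightarrow> 'v) \<Rightarrow> 'v \<Rightarrow> 'v \<Rightarrow> 'v" where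
  "deltaI1 br h x y = br x (h y) + br (h x) y - h (br x y)"

definition deltaII1 :: "('v::ab_group_add \<Rightarrow> 'v \<Rightarrow> 'v \<Rightarrow> 'v) \<Rightarrow> ('v \<Rightarrow> 'v) \<Rightarrow> 'v \<Rightarrow> 'v \<Rightarrow> 'v \<Rightarrow> 'v" where
  "deltaII1 tr h x y z = tr (h x) y z + tr x (h y) z + tr x y (h z) - h (tr x y z)"

definition HomB23 :: "('k::field \<Rightarrow> 'v::ab_group_add \<Rightarrow> 'v) \<Rightarrow> ('v \<Rightarrow> 'v \<Rightarrow> 'v)
   \<Rightarrow> ('v \<Rightarrow> 'v \<Rightarrow> 'v \<Rightarrow> 'v) \<Rightarrow> ('v \<Rightarrow> 'v) \<Rightarrow> (('v \<Rightarrow> 'v \<Rightarrow> 'v) \<times> ('v \<Rightarrow> 'v \<Rightarrow> 'v \<Rightarrow> 'v)) set" where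
  "HomB23 s br tr \<alpha> = {(deltaI1 br h, deltaII1 tr h) | h. h \<in> HomC1 s \<alpha>}"

end

theory Submission
  imports Defs
begin

(* Compare the coefficients of t in Phi_t(f_t(x,y)) = f'_t(Phi_t x, Phi_t y) and in its
   ternary and alpha-analogues, evaluated at constant series. Since phi_0 = id and
   f_0 = f'_0 = [.,.], the t-coefficient reads f_1(x,y) + phi_1[xy] =
   [x phi_1(y)] + [phi_1(x) y] + f'_1(x,y), i.e. f_1 - f'_1 = delta_I^1 phi_1; likewise
   g_1 - g'_1 = delta_II^1 phi_1, and phi_1 commutes with alpha, so phi_1 is a 1-cochain. *)

lemma lin1_zero: "lin1 s h \<Longrightarrow> h 0 = 0"
  unfolding lin1_def Vector_Spaces.linear_def by (metis module_hom.zero)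

lemma lin2_zero: "lin2 s f \<Longrightarrow> f x 0 = 0 \<and> f 0 y = 0"
  unfolding lin2_def using lin1_zero by metis

lemma lin3_zero: "lin3 s g \<Longrightarrow> g x y 0 = 0 \<and> g x 0 z = 0 \<and> g 0 y z = 0"
  unfolding lin3_def using lin1_zero by metis

definition const_pser :: "'v::zero \<Rightarrow> 'v pser" where
  "const_pser x = (\<lambda>n. if n = 0 then x else 0)"

lemma const_pser_simps [simp]:
  "const_pser x 0 = x" "const_pser x (Suc n) = 0"
  by (simp_all add: const_pser_def)

lemma ext1_coeff_0: "ext1 \<phi> x 0 = \<phi> 0 (x 0)"
  by (simp add: ext1_def)

lemma ext1_coeff_1: "ext1 \<phi> x (Suc 0) = \<phi> 0 (x (Suc 0)) + \<phi> (Suc 0) (x 0)"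
  by (simp add: ext1_def)

lemma ext2_coeff_0: "ext2 f x y 0 = f 0 (x 0) (y 0)"
  by (simp add: ext2_def)

lemma ext2_coeff_1:
  "ext2 f x y (Suc 0) = f 0 (x 0) (y (Suc 0)) + f 0 (x (Suc 0)) (y 0) + f (Suc 0) (x 0) (y 0)"
  by (simp add: ext2_def)

lemma ext3_coeff_0: "ext3 g x y z 0 = g 0 (x 0) (y 0) (z 0)"
  by (simp add: ext3_def)

lemma ext3_coeff_1:
  "ext3 g x y z (Suc 0) = g 0 (x 0) (y 0) (z (Suc 0)) + g 0 (x 0) (y (Suc 0)) (z 0)
     + g 0 (x (Suc 0)) (y 0) (z 0) + g (Suc 0) (x 0) (y 0) (z 0)"
  by (simp add: ext3_def add.assoc)

lemma first_order_commutes_with_alpha: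
  assumes "\<phi> 0 = id" and "\<alpha> 0 = 0"
    and "\<And>x. ext1 \<phi> (ext_alpha \<alpha> x) = ext_alpha \<alpha> (ext1 \<phi> x)"
  shows "\<phi> 1 (\<alpha> x) = \<alpha> (\<phi> 1 x)"
proof -
  have "ext1 \<phi> (ext_alpha \<alpha> (const_pser x)) (Suc 0) = ext_alpha \<alpha> (ext1 \<phi> (const_pser x)) (Suc 0)"
    using assms(3) by simp
  then show ?thesis
    by (simp add: ext1_coeff_1 ext_alpha_def assms(1,2))
qed

lemma first_order_bracket_difference:
  assumes "\<phi> 0 = id" and "f' 0 = f 0" and "\<And>x. f 0 x 0 = 0" and "\<And>y. f 0 0 y = 0"
    and "\<And>x y. ext1 \<phi> (ext2 f x y) = ext2 f' (ext1 \<phi> x) (ext1 \<phi> y)"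
  shows "f 1 x y - f' 1 x y = deltaI1 (f 0) (\<phi> 1) x y"
proof -
  have "ext1 \<phi> (ext2 f (const_pser x) (const_pser y)) (Suc 0)
      = ext2 f' (ext1 \<phi> (const_pser x)) (ext1 \<phi> (const_pser y)) (Suc 0)"
    using assms(5) by simp
  then have "f 1 x y + \<phi> 1 (f 0 x y) = f 0 x (\<phi> 1 y) + f 0 (\<phi> 1 x) y + f' 1 x y"
    by (simp add: ext1_coeff_0 ext1_coeff_1 ext2_coeff_0 ext2_coeff_1 assms(1-4))
  then show ?thesis
    by (simp add: deltaI1_def algebra_simps)
qed

lemma first_order_triple_bracket_difference:
  assumes "\<phi> 0 = id" and "g' 0 = g 0"
    and "\<And>x y. g 0 x y 0 = 0" and "\<And>x z. g 0 x 0 z = 0" and "\<And>y z. g 0 0 y z = 0"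
    and "\<And>x y z. ext1 \<phi> (ext3 g x y z) = ext3 g' (ext1 \<phi> x) (ext1 \<phi> y) (ext1 \<phi> z)"
  shows "g 1 x y z - g' 1 x y z = deltaII1 (g 0) (\<phi> 1) x y z"
proof -
  have "ext1 \<phi> (ext3 g (const_pser x) (const_pser y) (const_pser z)) (Suc 0)
      = ext3 g' (ext1 \<phi> (const_pser x)) (ext1 \<phi> (const_pser y)) (ext1 \<phi> (const_pser z)) (Suc 0)"
    using assms(6) by simp
  then have "g 1 x y z + \<phi> 1 (g 0 x y z)
      = g 0 x y (\<phi> 1 z) + g 0 x (\<phi> 1 y) z + g 0 (\<phi> 1 x) y z + g' 1 x y z"
    by (simp add: ext1_coeff_0 ext1_coeff_1 ext3_coeff_0 ext3_coeff_1 assms(1-5))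
  then show ?thesis
    by (simp add: deltaII1_def algebra_simps)
qed

theorem mainTheorem4:
  fixes s :: "'k::field \<Rightarrow> 'v::ab_group_add \<Rightarrow> 'v"
    and br :: "'v \<Rightarrow> 'v \<Rightarrow> 'v" and tr :: "'v \<Rightarrow> 'v \<Rightarrow> 'v \<Rightarrow> 'v" and \<alpha> :: "'v \<Rightarrow> 'v"
    and f f' :: "nat \<Rightarrow> 'v \<Rightarrow> 'v \<Rightarrow> 'v" and g g' :: "nat \<Rightarrow> 'v \<Rightarrow> 'v \<Rightarrow> 'v \<Rightarrow> 'v"
  assumes "HLYA s br tr \<alpha>"
    and "formal_deformation s br tr \<alpha> f g"
    and "formal_deformation s br tr \<alpha> f' g'"
    and "equivalent_deformations s \<alpha> f g f' g'"
  shows "((\<lambda>x y. f 1 x y - f' 1 x y), (\<lambda>x y z. g 1 x y z - g' 1 x y z)) \<in> HomB23 s br tr \<alpha>"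
proof -
  from assms(4) obtain \<phi> where \<phi>0: "\<phi> 0 = id" and \<phi>_lin: "\<And>i. lin1 s (\<phi> i)"
    and \<phi>_alpha: "\<And>x. ext1 \<phi> (ext_alpha \<alpha> x) = ext_alpha \<alpha> (ext1 \<phi> x)"
    and \<phi>_br: "\<And>x y. ext1 \<phi> (ext2 f x y) = ext2 f' (ext1 \<phi> x) (ext1 \<phi> y)"
    and \<phi>_tr: "\<And>x y z. ext1 \<phi> (ext3 g x y z) = ext3 g' (ext1 \<phi> x) (ext1 \<phi> y) (ext1 \<phi> z)"
    unfolding equivalent_deformations_def by blast
  have f0: "f 0 = br" "f' 0 = br" and g0: "g 0 = tr" "g' 0 = tr"
    using assms(2,3) unfolding formal_deformation_def by auto
  have "lin1 s \<alpha>" and "lin2 s br" and "lin3 s tr"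
    using assms(1) unfolding HLYA_def by auto
  then have "\<alpha> 0 = 0" and br0: "\<And>x y. br x 0 = 0 \<and> br 0 y = 0"
    and tr0: "\<And>x y z. tr x y 0 = 0 \<and> tr x 0 z = 0 \<and> tr 0 y z = 0"
    using lin1_zero lin2_zero lin3_zero by blast+
  have "\<phi> 1 \<in> HomC1 s \<alpha>"
    using \<phi>_lin first_order_commutes_with_alpha[OF \<phi>0 \<open>\<alpha> 0 = 0\<close> \<phi>_alpha]
    unfolding HomC1_def by blast
  moreover have "f 1 x y - f' 1 x y = deltaI1 br (\<phi> 1) x y" for x y
    using first_order_bracket_difference[OF \<phi>0 _ _ _ \<phi>_br] f0 br0 by simp
  moreover have "g 1 x y z - g' 1 x y z = deltaII1 tr (\<phi> 1) x y z" for x y z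
    using first_order_triple_bracket_difference[OF \<phi>0 _ _ _ _ \<phi>_tr] g0 tr0 by simp
  ultimately show ?thesis
    unfolding HomB23_def by (auto intro!: exI[of _ "\<phi> 1"])
qed

end
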